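(* Let $X$ be a continuum (nonempty compact connected metric space) and $f: X \rightarrow X$ a homeomorphism. If $f$ admits a special dendrite, then $h(C(f))=\infty$, and therefore $h(2^f)=\infty$.
   Context: $2^X$ (resp. $C(X)$) is the hyperspace of nonempty closed (resp. nonempty compact connected) subsets of $X$ with the Hausdorff metric, $2^f(A)=f(A)$, $C(f)=2^f|_{C(X)}$; $h$ is topological entropy. Special dendrite: in $\mathbb{R}^2$ let $p=(-1,0)$, $q=(1,0)$, $a_0=0$, $a_n=1-\frac{1}{n+1}$, $a_{-n}=-a_n$ ($n\ge1$), $L_n=\{a_n\}\times[0,\frac{1}{|n|+1}]$, $X_0=([-1,1]\times\{0\})\cup\bigcup_{n}L_n$. Let $F:X_0\to X_0$ be a homeomorphism such that $F|_{[-1,1]\times\{0\}}$ is a homeomorphism of the segment with $F(p)=p$, $F(q)=q$, $F((a_n,0))=(a_{n+1},0)$, and $F|_{L_n}:L_n\to L_{n+1}$ is a linear homeomorphism for each $n$. $f$ admits a special dendrite if there are a closed $\Lambda\subset X$ and $k\in\mathbb{N}$ with $\Lambda$ $f^k$-invariant and $f^k|_\Lambda$ topologically conjugate to $F$. *)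

theory Defs
  imports "HOL-Analysis.Analysis"
begin

definition hausdorff_dist :: "'a::metric_space set \<Rightarrow> 'a set \<Rightarrow> real" where
  "hausdorff_dist A B = max (SUP x\<in>A. infdist x B) (SUP y\<in>B. infdist y A)"

definition hyperspace :: "'a::metric_space set \<Rightarrow> 'a set set" where
  "hyperspace X = {A. A \<subseteq> X \<and> closed A \<and> A \<noteq> {}}"

definition continua_hyperspace :: "'a::metric_space set \<Rightarrow> 'a set set" where
  "continua_hyperspace X = {A. A \<subseteq> X \<and> compact A \<and> connected A \<and> A \<noteq> {}}"

text \<open>induced map 2^f (and C(f) when restricted to C(X))\<close>
definition induced_map :: "('a \<Rightarrow> 'b) \<Rightarrow> 'a set \<Rightarrow> 'b set" where
  "induced_map f A = f ` A"

definition separated_set ::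
  "('b \<Rightarrow> 'b \<Rightarrow> real) \<Rightarrow> ('b \<Rightarrow> 'b) \<Rightarrow> 'b set \<Rightarrow> nat \<Rightarrow> real \<Rightarrow> 'b set \<Rightarrow> bool" where
  "separated_set d g K n \<epsilon> E \<longleftrightarrow> E \<subseteq> K \<and> finite E \<and>
     (\<forall>x\<in>E. \<forall>y\<in>E. x \<noteq> y \<longrightarrow> (\<exists>i<n. d ((g ^^ i) x) ((g ^^ i) y) > \<epsilon>))"

definition top_entropy ::
  "('b \<Rightarrow> 'b \<Rightarrow> real) \<Rightarrow> ('b \<Rightarrow> 'b) \<Rightarrow> 'b set \<Rightarrow> ereal" where
  "top_entropy d g K = (SUP \<epsilon>\<in>{0<..}.
     limsup (\<lambda>n. SUP E\<in>{E. separated_set d g K n \<epsilon> E}. ereal (ln (real (card E)) / real n)))"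

definition dendrite_a :: "int \<Rightarrow> real" where
  "dendrite_a n = (if n = 0 then 0 else sgn (real_of_int n) * (1 - 1 / (real_of_int \<bar>n\<bar> + 1)))"

definition dendrite_L :: "int \<Rightarrow> (real \<times> real) set" where
  "dendrite_L n = {dendrite_a n} \<times> {0 .. 1 / (real_of_int \<bar>n\<bar> + 1)}"

definition dendrite_base :: "(real \<times> real) set" where
  "dendrite_base = {-1 .. 1} \<times> {0}"

definition dendrite_X0 :: "(real \<times> real) set" where
  "dendrite_X0 = dendrite_base \<union> (\<Union>n. dendrite_L n)"

definition special_dendrite_map :: "(real \<times> real \<Rightarrow> real \<times> real) \<Rightarrow> bool" where
  "special_dendrite_map F \<longleftrightarrow>
     (\<exists>G. homeomorphism dendrite_X0 dendrite_X0 F G) \<and>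
     (\<exists>G. homeomorphism dendrite_base dendrite_base F G) \<and>
     F (-1, 0) = (-1, 0) \<and> F (1, 0) = (1, 0) \<and>
     (\<forall>n. F (dendrite_a n, 0) = (dendrite_a (n + 1), 0)) \<and>
     (\<forall>n. F ` dendrite_L n = dendrite_L (n + 1) \<and>
          (\<exists>c m. \<forall>t\<in>{0 .. 1 / (real_of_int \<bar>n\<bar> + 1)}.
              F (dendrite_a n, t) = (dendrite_a (n + 1), c * t + m)))"

definition admits_special_dendrite :: "'a::metric_space set \<Rightarrow> ('a \<Rightarrow> 'a) \<Rightarrow> bool" where
  "admits_special_dendrite X f \<longleftrightarrow>
     (\<exists>F \<Lambda> k. special_dendrite_map F \<and> closed \<Lambda> \<and> \<Lambda> \<subseteq> X \<and> k \<ge> 1 \<and>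
        (f ^^ k) ` \<Lambda> \<subseteq> \<Lambda> \<and>
        (\<exists>\<phi> \<psi>. homeomorphism \<Lambda> dendrite_X0 \<phi> \<psi> \<and>
           (\<forall>x\<in>\<Lambda>. \<phi> ((f ^^ k) x) = F (\<phi> x))))"

end

theory Submission
  imports Defs
begin

text \<open>
  For \<open>K \<ge> 2\<close> and a word \<open>w\<close> of length \<open>n\<close> over \<open>{0, \<dots>, K - 1}\<close>, take the subcontinuum
  of the special dendrite made of the base segment together with, for each \<open>l < n\<close>, the lower
  part of \<open>L\<^sub>-\<^sub>l\<close> of relative height \<open>w\<^sub>l / K\<close>. Since \<open>F\<close> stretches \<open>L\<^sub>j\<close> linearly onto
  \<open>L\<^sub>j\<^sub>+\<^sub>1\<close>, after \<open>i\<close> steps the letter \<open>w\<^sub>i\<close> stands on the central spike \<open>L\<^sub>0\<close>, so two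
  different words give continua with a point \<open>1/K\<close> away from the other continuum at some
  time \<open>i < n\<close>. Carried into \<open>\<Lambda>\<close> by the conjugacy, whose inverse is uniformly continuous on
  the compact set \<open>\<Lambda>\<close>, these \<open>K\<^sup>n\<close> continua form an \<open>(nk, \<epsilon>)\<close>-separated set for \<open>C(f)\<close>
  with \<open>\<epsilon>\<close> depending only on \<open>K\<close>. Hence \<open>h(C(f)) \<ge> (log K) / k\<close> for every \<open>K\<close>, and
  \<open>h(2\<^sup>f) \<ge> h(C(f))\<close> because \<open>C(X) \<subseteq> 2\<^sup>X\<close>.
\<close>

section \<open>Topological entropy from separated sets\<close>

lemma top_entropy_mono:
  assumes "S \<subseteq> T"
  shows "top_entropy d g S \<le> top_entropy d g T"
proof -
  have "{E. separated_set d g S n \<epsilon> E} \<subseteq> {E. separated_set d g T n \<epsilon> E}" for n \<epsilon>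
    using assms unfolding separated_set_def by auto
  then have "(SUP E\<in>{E. separated_set d g S n \<epsilon> E}. ereal (ln (real (card E)) / real n))
      \<le> (SUP E\<in>{E. separated_set d g T n \<epsilon> E}. ereal (ln (real (card E)) / real n))" for n \<epsilon>
    by (rule SUP_subset_mono) simp
  then show ?thesis
    unfolding top_entropy_def by (intro SUP_mono' Limsup_mono always_eventually allI)
qed

lemma top_entropy_ge_of_separated_sets:
  assumes "k \<ge> 1" "\<epsilon> > 0"
    and sep: "\<And>n. n \<ge> 1 \<Longrightarrow> \<exists>E. separated_set d g S (n * k) \<epsilon> E \<and> card E = K ^ n"
  shows "ereal (ln (real K) / real k) \<le> top_entropy d g S"
proof -
  define u where "u m = (SUP E\<in>{E. separated_set d g S m \<epsilon> E}. ereal (ln (real (card E)) / real m))" for m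
  define r where "r n = (n + 1) * k" for n
  have "strict_mono r"
    unfolding r_def using \<open>k \<ge> 1\<close> by (intro strict_monoI) simp
  have "ereal (ln (real K) / real k) \<le> u (r n)" for n
  proof -
    obtain E where E: "separated_set d g S (r n) \<epsilon> E" "card E = K ^ (n + 1)"
      using sep[of "n + 1"] unfolding r_def by auto
    have "ln (real (card E)) = real (n + 1) * ln (real K)"
      using E(2) by (simp only: of_nat_power ln_realpow)
    then have "ln (real (card E)) / real (r n) = ln (real K) / real k"
      unfolding r_def by (simp only: of_nat_mult) simp
    moreover have "ereal (ln (real (card E)) / real (r n)) \<le> u (r n)"
      unfolding u_def using E(1) by (intro SUP_upper) simp
    ultimately show ?thesis by simp
  qed
  then have "ereal (ln (real K) / real k) \<le> limsup (u \<circ> r)"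
    by (intro le_Limsup always_eventually) auto
  also have "\<dots> \<le> limsup u"
    using \<open>strict_mono r\<close> by (rule limsup_subseq_mono)
  also have "\<dots> \<le> top_entropy d g S"
    unfolding top_entropy_def u_def using \<open>\<epsilon> > 0\<close> by (intro SUP_upper) simp
  finally show ?thesis .
qed

lemma top_entropy_eq_infinity_of_separated_sets:
  assumes "k \<ge> 1"
    and sep: "\<And>K. K \<ge> 2 \<Longrightarrow> \<exists>\<epsilon>>0. \<forall>n\<ge>1. \<exists>E. separated_set d g S (n * k) \<epsilon> E \<and> card E = K ^ n"
  shows "top_entropy d g S = \<infinity>"
proof (rule ereal_top)
  fix B :: real
  define K where "K = nat \<lceil>exp (B * real k)\<rceil> + 2"
  obtain \<epsilon> where "\<epsilon> > 0" "\<forall>n\<ge>1. \<exists>E. separated_set d g S (n * k) \<epsilon> E \<and> card E = K ^ n"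
    using sep[of K] by (auto simp: K_def)
  then have entropy_ge: "ereal (ln (real K) / real k) \<le> top_entropy d g S"
    using \<open>k \<ge> 1\<close> by (intro top_entropy_ge_of_separated_sets) (auto simp: K_def)
  have "exp (B * real k) \<le> real K"
    unfolding K_def by linarith
  then have "B * real k \<le> ln (real K)"
    by (metis exp_gt_zero ln_exp ln_le_cancel_iff order_less_le_trans)
  then have "B \<le> ln (real K) / real k"
    using \<open>k \<ge> 1\<close> by (simp add: pos_le_divide_eq)
  then show "ereal B \<le> top_entropy d g S"
    using entropy_ge by (metis ereal_less_eq(3) order_trans)
qed

section \<open>Hausdorff distance and conjugacies\<close>

lemma hausdorff_dist_self: "A \<noteq> {} \<Longrightarrow> hausdorff_dist A A = 0"
  unfolding hausdorff_dist_def by simp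

lemma infdist_le_hausdorff_dist:
  assumes "x \<in> A" "bounded A"
  shows "infdist x B \<le> hausdorff_dist A B" "infdist x B \<le> hausdorff_dist B A"
proof -
  obtain r where "\<forall>y\<in>A. infdist y B \<le> r"
  proof (cases "B = {}")
    case False
    then obtain b where "b \<in> B" by blast
    obtain r where "\<forall>y\<in>A. dist b y \<le> r"
      using \<open>bounded A\<close> bounded_any_center by blast
    then show ?thesis
      using that infdist_le[OF \<open>b \<in> B\<close>] by (metis dist_commute order_trans)
  qed (auto simp: infdist_def)
  then have "infdist x B \<le> (SUP y\<in>A. infdist y B)"
    using \<open>x \<in> A\<close> by (intro cSUP_upper bdd_aboveI2) auto
  then show "infdist x B \<le> hausdorff_dist A B" "infdist x B \<le> hausdorff_dist B A"
    unfolding hausdorff_dist_def by auto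
qed

lemma le_infdistI:
  assumes "A \<noteq> {}" "\<And>a. a \<in> A \<Longrightarrow> e \<le> dist x a"
  shows "e \<le> infdist x A"
  using assms unfolding infdist_eq_setdist by (intro le_setdistI) auto

lemma infdist_ge_of_uniformly_continuous_image:
  assumes "uniformly_continuous_on S \<phi>" "e > 0"
  obtains \<delta> where "\<delta> > 0"
    and "\<And>p Q. p \<in> S \<Longrightarrow> Q \<subseteq> S \<Longrightarrow> Q \<noteq> {} \<Longrightarrow> e \<le> infdist (\<phi> p) (\<phi> ` Q) \<Longrightarrow> \<delta> \<le> infdist p Q"
proof -
  obtain \<delta> where "\<delta> > 0" and \<delta>: "\<And>p q. p \<in> S \<Longrightarrow> q \<in> S \<Longrightarrow> dist q p < \<delta> \<Longrightarrow> dist (\<phi> q) (\<phi> p) < e"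
    using assms unfolding uniformly_continuous_on_def by metis
  have "\<delta> \<le> infdist p Q"
    if "p \<in> S" "Q \<subseteq> S" "Q \<noteq> {}" and far: "e \<le> infdist (\<phi> p) (\<phi> ` Q)" for p Q
  proof -
    have "\<delta> \<le> dist p q" if "q \<in> Q" for q
    proof -
      have "e \<le> dist (\<phi> p) (\<phi> q)"
        using far infdist_le[of "\<phi> q" "\<phi> ` Q" "\<phi> p"] \<open>q \<in> Q\<close> by simp
      then show ?thesis
        using \<delta>[of p q] \<open>p \<in> S\<close> \<open>q \<in> Q\<close> \<open>Q \<subseteq> S\<close> by (force simp: dist_commute)
    qed
    then show ?thesis
      using \<open>Q \<noteq> {}\<close> by (intro le_infdistI) auto
  qed
  with \<open>\<delta> > 0\<close> that show ?thesis by blast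
qed

lemma funpow_induced_map:
  fixes f :: "'a \<Rightarrow> 'a"
  shows "(induced_map f ^^ m) A = (f ^^ m) ` A"
proof -
  have "induced_map f = image f"
    by (simp add: fun_eq_iff induced_map_def)
  then show ?thesis
    by (induction m) (simp_all add: image_comp)
qed

lemma homeomorphism_conjugacy_funpow:
  assumes hom: "homeomorphism S T \<phi> \<psi>" and inv: "g ` S \<subseteq> S"
    and conj: "\<And>x. x \<in> S \<Longrightarrow> \<phi> (g x) = F (\<phi> x)" and "y \<in> T"
  shows "(F ^^ i) y \<in> T \<and> (g ^^ i) (\<psi> y) = \<psi> ((F ^^ i) y)"
proof (induction i)
  case (Suc i)
  define x where "x = \<psi> ((F ^^ i) y)"
  have "x \<in> S" "\<phi> x = (F ^^ i) y"
    using Suc hom unfolding x_def homeomorphism_def by auto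
  then have "g x \<in> S" "\<phi> (g x) = (F ^^ Suc i) y"
    using inv conj by auto
  then show ?case
    using Suc hom unfolding x_def homeomorphism_def by force
qed (use \<open>y \<in> T\<close> in simp)

lemma homeomorphism_conjugacy_image_funpow:
  assumes "homeomorphism S T \<phi> \<psi>" "g ` S \<subseteq> S"
    and "\<And>x. x \<in> S \<Longrightarrow> \<phi> (g x) = F (\<phi> x)" and "B \<subseteq> T"
  shows "(g ^^ i) ` \<psi> ` B = \<psi> ` (F ^^ i) ` B"
  using homeomorphism_conjugacy_funpow[OF assms(1-3)] \<open>B \<subseteq> T\<close>
  by (simp add: image_image subset_iff cong: image_cong)

section \<open>Subcontinua of the special dendrite encoding words\<close>

definition dendrite_len :: "int \<Rightarrow> real" where
  "dendrite_len j = 1 / (real_of_int \<bar>j\<bar> + 1)"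

definition dendrite_stalk :: "int \<Rightarrow> real \<Rightarrow> (real \<times> real) set" where
  "dendrite_stalk j r = {dendrite_a j} \<times> {0 .. r * dendrite_len j}"

text \<open>The continuum of the word \<open>w\<close> at time \<open>i\<close>: letter \<open>l\<close> is a stalk on \<open>L\<^sub>i\<^sub>-\<^sub>l\<close>.\<close>

definition word_dendrite :: "nat \<Rightarrow> nat list \<Rightarrow> nat \<Rightarrow> (real \<times> real) set" where
  "word_dendrite K w i =
     dendrite_base \<union> (\<Union>l<length w. dendrite_stalk (int i - int l) (real (w ! l) / real K))"

lemma dendrite_len_pos: "0 < dendrite_len j"
  by (simp add: dendrite_len_def add_pos_nonneg)

lemma dendrite_len_zero [simp]: "dendrite_len 0 = 1"
  by (simp add: dendrite_len_def)

lemma dendrite_a_zero [simp]: "dendrite_a 0 = 0"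
  by (simp add: dendrite_a_def)

lemma dendrite_a_bounds: "dendrite_a j \<in> {-1..1}"
  by (auto simp: dendrite_a_def sgn_if field_simps)

lemma abs_dendrite_a_ge:
  assumes "j \<noteq> 0"
  shows "1/2 \<le> \<bar>dendrite_a j\<bar>"
proof -
  have "1 \<le> real_of_int \<bar>j\<bar>"
    using assms by linarith
  then have "1/2 \<le> 1 - 1 / (real_of_int \<bar>j\<bar> + 1)"
    by (simp add: field_simps)
  then show ?thesis
    using assms by (simp add: dendrite_a_def abs_mult abs_sgn_eq)
qed

lemma dendrite_L_eq: "dendrite_L j = {dendrite_a j} \<times> {0 .. dendrite_len j}"
  by (simp add: dendrite_L_def dendrite_len_def)

lemma dendrite_stalk_height_le:
  assumes "r \<le> 1"
  shows "r * dendrite_len j \<le> dendrite_len j"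
  using mult_right_mono[OF assms less_imp_le[OF dendrite_len_pos]] by simp

lemma dendrite_stalk_subset:
  assumes "r \<le> 1"
  shows "dendrite_stalk j r \<subseteq> dendrite_L j"
  using dendrite_stalk_height_le[OF assms, of j] by (auto simp: dendrite_stalk_def dendrite_L_eq)

lemma dendrite_foot_in_stalk:
  assumes "0 \<le> r"
  shows "(dendrite_a j, 0) \<in> dendrite_base \<inter> dendrite_stalk j r"
  using assms dendrite_a_bounds[of j] dendrite_len_pos[of j]
  by (simp add: dendrite_base_def dendrite_stalk_def)

lemma special_dendrite_map_base:
  "special_dendrite_map F \<Longrightarrow> F ` dendrite_base = dendrite_base"
  unfolding special_dendrite_map_def homeomorphism_def by blast

lemma special_dendrite_map_L:
  assumes "special_dendrite_map F"
  shows "F ` dendrite_L j = dendrite_L (j + 1)"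
    and "F (dendrite_a j, 0) = (dendrite_a (j + 1), 0)"
    and "\<exists>c m. \<forall>t\<in>{0 .. dendrite_len j}. F (dendrite_a j, t) = (dendrite_a (j + 1), c * t + m)"
  using assms unfolding special_dendrite_map_def dendrite_len_def by simp_all

lemma special_dendrite_map_scaling:
  assumes F: "special_dendrite_map F"
  obtains c where "0 < c" "c * dendrite_len j = dendrite_len (j + 1)"
    and "\<And>t. t \<in> {0 .. dendrite_len j} \<Longrightarrow> F (dendrite_a j, t) = (dendrite_a (j + 1), c * t)"
proof -
  obtain c m where affine: "\<And>t. t \<in> {0 .. dendrite_len j} \<Longrightarrow>
      F (dendrite_a j, t) = (dendrite_a (j + 1), c * t + m)"
    using special_dendrite_map_L(3)[OF F] by metis
  have len: "0 < dendrite_len j" "0 < dendrite_len (j + 1)"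
    by (rule dendrite_len_pos)+
  have "m = 0"
    using affine[of 0] special_dendrite_map_L(2)[OF F] len by simp
  have "(dendrite_a j, dendrite_len j) \<in> dendrite_L j"
    using len by (simp add: dendrite_L_eq)
  then have "F (dendrite_a j, dendrite_len j) \<in> dendrite_L (j + 1)"
    using special_dendrite_map_L(1)[OF F] by (metis imageI)
  then have top: "c * dendrite_len j \<le> dendrite_len (j + 1)"
    using affine[of "dendrite_len j"] len \<open>m = 0\<close> by (simp add: dendrite_L_eq)
  have "(dendrite_a (j + 1), dendrite_len (j + 1)) \<in> F ` dendrite_L j"
    using special_dendrite_map_L(1)[OF F] len by (simp add: dendrite_L_eq)
  then obtain t where t: "t \<in> {0 .. dendrite_len j}" "c * t = dendrite_len (j + 1)"
    using affine \<open>m = 0\<close> by (auto simp: dendrite_L_eq)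
  then have "0 < c"
    using len by (auto simp: zero_less_mult_iff dest: sym)
  moreover have "c * dendrite_len j = dendrite_len (j + 1)"
    using \<open>0 < c\<close> t top mult_left_mono[of t "dendrite_len j" c] by simp
  ultimately show thesis
    using affine \<open>m = 0\<close> by (intro that) auto
qed

lemma special_dendrite_map_stalk:
  assumes F: "special_dendrite_map F" and "0 \<le> r" "r \<le> 1"
  shows "F ` dendrite_stalk j r = dendrite_stalk (j + 1) r"
proof -
  obtain c where "0 < c" and scale: "c * dendrite_len j = dendrite_len (j + 1)"
    and linear: "\<And>t. t \<in> {0 .. dendrite_len j} \<Longrightarrow> F (dendrite_a j, t) = (dendrite_a (j + 1), c * t)"
    using special_dendrite_map_scaling[OF F] by blast
  have height: "c * (r * dendrite_len j) = r * dendrite_len (j + 1)"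
    using scale by (metis mult.left_commute)
  have "{0 .. r * dendrite_len j} \<subseteq> {0 .. dendrite_len j}"
    using dendrite_stalk_height_le[OF \<open>r \<le> 1\<close>] by auto
  then have "(\<lambda>t. F (dendrite_a j, t)) ` {0 .. r * dendrite_len j}
      = (\<lambda>t. (dendrite_a (j + 1), c * t)) ` {0 .. r * dendrite_len j}"
    using linear by (intro image_cong) auto
  moreover have "dendrite_stalk j r = (\<lambda>t. (dendrite_a j, t)) ` {0 .. r * dendrite_len j}"
    by (auto simp: dendrite_stalk_def)
  ultimately have "F ` dendrite_stalk j r = {dendrite_a (j + 1)} \<times> ((*) c ` {0 .. r * dendrite_len j})"
    by (auto simp: image_image)
  then show ?thesis
    using \<open>0 < c\<close> height by (simp add: dendrite_stalk_def)
qed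

lemma image_funpow_word_dendrite:
  assumes F: "special_dendrite_map F" and w: "set w \<subseteq> {..K}"
  shows "(F ^^ i) ` word_dendrite K w 0 = word_dendrite K w i"
proof (induction i)
  case (Suc i)
  have "F ` dendrite_stalk (int i - int l) (real (w ! l) / real K)
      = dendrite_stalk (int (Suc i) - int l) (real (w ! l) / real K)" if "l < length w" for l
  proof -
    have "w ! l \<le> K"
      using w that by (auto dest: nth_mem)
    then have "real (w ! l) / real K \<le> 1"
      by (cases "K = 0") (simp_all add: divide_le_eq_1)
    then show ?thesis
      using special_dendrite_map_stalk[OF F, of "real (w ! l) / real K" "int i - int l"]
      by (simp add: algebra_simps)
  qed
  then have "F ` word_dendrite K w i = word_dendrite K w (Suc i)"
    unfolding word_dendrite_def image_Un image_UN special_dendrite_map_base[OF F] by simp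
  then show ?case
    using Suc.IH by (metis funpow.simps(2) image_comp)
qed simp

lemma word_dendrite_subset:
  assumes "set w \<subseteq> {..K}"
  shows "word_dendrite K w i \<subseteq> dendrite_X0"
proof -
  have "dendrite_stalk (int i - int l) (real (w ! l) / real K) \<subseteq> dendrite_L (int i - int l)"
    if "l < length w" for l
    using assms that by (intro dendrite_stalk_subset) (auto simp: divide_le_eq_1 dest: nth_mem)
  then show ?thesis
    unfolding word_dendrite_def dendrite_X0_def by blast
qed

lemma word_dendrite_nonempty: "word_dendrite K w i \<noteq> {}"
  by (auto simp: word_dendrite_def dendrite_base_def)

lemma compact_word_dendrite: "compact (word_dendrite K w i)"
  unfolding word_dendrite_def dendrite_stalk_def dendrite_base_def
  by (intro compact_UN compact_Un compact_Times) auto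

lemma connected_word_dendrite: "connected (word_dendrite K w i)"
  unfolding word_dendrite_def
proof (rule connected_Un_UN)
  show "connected dendrite_base"
    unfolding dendrite_base_def by (intro connected_Times) auto
  fix X
  assume "X \<in> (\<lambda>l. dendrite_stalk (int i - int l) (real (w ! l) / real K)) ` {..<length w}"
  then obtain j r where "X = dendrite_stalk j r" "0 \<le> r"
    by auto
  then show "connected X" "dendrite_base \<inter> X \<noteq> {}"
    using dendrite_foot_in_stalk[of r j] by (auto simp: dendrite_stalk_def intro: connected_Times)
qed

lemma word_dendrite_far_point:
  assumes "K \<ge> 2" "i < length w" "w' ! i < w ! i"
  shows "\<exists>p\<in>word_dendrite K w i. 1 / real K \<le> infdist p (word_dendrite K w' i)"
proof
  \<comment> \<open>the top of the stalk of letter \<open>i\<close>, which stands on \<open>L\<^sub>0 = {0} \<times> [0, 1]\<close>\<close>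
  define p where "p = (0 :: real, real (w ! i) / real K)"
  have "p \<in> dendrite_stalk (int i - int i) (real (w ! i) / real K)"
    by (simp add: p_def dendrite_stalk_def)
  then show "p \<in> word_dendrite K w i"
    unfolding word_dendrite_def using \<open>i < length w\<close> by blast
  have K: "0 < real K" "1 / real K \<le> 1/2"
    using \<open>K \<ge> 2\<close> by (auto simp: field_simps)
  have "1 / real K \<le> dist p q" if q: "q \<in> word_dendrite K w' i" for q
  proof -
    have dist_ge: "\<bar>fst p - fst q\<bar> \<le> dist p q" "\<bar>snd p - snd q\<bar> \<le> dist p q"
      using dist_fst_le[of p q] dist_snd_le[of p q] by (auto simp: dist_real_def)
    consider "q \<in> dendrite_base"
      | l where "l < length w'" "q \<in> dendrite_stalk (int i - int l) (real (w' ! l) / real K)"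
      using q unfolding word_dendrite_def by blast
    then show ?thesis
    proof cases
      case 1
      then have "snd q = 0"
        by (auto simp: dendrite_base_def)
      moreover have "1 / real K \<le> real (w ! i) / real K"
        using assms K by (simp add: divide_right_mono)
      ultimately show ?thesis
        using dist_ge by (simp add: p_def)
    next
      case (2 l)
      show ?thesis
      proof (cases "l = i")
        case True
        then have "snd q \<le> real (w' ! i) / real K"
          using 2 by (auto simp: dendrite_stalk_def)
        moreover have "real (w' ! i) / real K \<le> real (w ! i) / real K - 1 / real K"
          using assms K by (simp add: diff_divide_distrib[symmetric] divide_right_mono)
        ultimately show ?thesis
          using dist_ge by (simp add: p_def)
      next
        case False
        then have "1/2 \<le> \<bar>fst q\<bar>"
          using 2 abs_dendrite_a_ge[of "int i - int l"] by (auto simp: dendrite_stalk_def)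
        moreover have "fst p = 0"
          by (simp add: p_def)
        ultimately show ?thesis
          using dist_ge(1) K(2) by linarith
      qed
    qed
  qed
  then show "1 / real K \<le> infdist p (word_dendrite K w' i)"
    using word_dendrite_nonempty by (intro le_infdistI)
qed
section \<open>Words carried into an embedded special dendrite\<close>

locale special_dendrite_embedding =
  fixes X :: "'a::metric_space set" and f :: "'a \<Rightarrow> 'a"
    and F :: "real \<times> real \<Rightarrow> real \<times> real" and \<Lambda> :: "'a set" and k :: nat
    and \<phi> :: "'a \<Rightarrow> real \<times> real" and \<psi> :: "real \<times> real \<Rightarrow> 'a"
  assumes special: "special_dendrite_map F"
    and compact: "compact \<Lambda>" and subset: "\<Lambda> \<subseteq> X" and period: "k \<ge> 1"
    and invariant: "(f ^^ k) ` \<Lambda> \<subseteq> \<Lambda>"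
    and hom: "homeomorphism \<Lambda> dendrite_X0 \<phi> \<psi>"
    and conj: "\<And>x. x \<in> \<Lambda> \<Longrightarrow> \<phi> ((f ^^ k) x) = F (\<phi> x)"

lemma admits_special_dendrite_embedding:
  assumes "compact X" "admits_special_dendrite X f"
  obtains F \<Lambda> k \<phi> \<psi> where "special_dendrite_embedding X f F \<Lambda> k \<phi> \<psi>"
proof -
  obtain F \<Lambda> k \<phi> \<psi> where "special_dendrite_map F" "closed \<Lambda>" "\<Lambda> \<subseteq> X" "k \<ge> 1"
    "(f ^^ k) ` \<Lambda> \<subseteq> \<Lambda>" "homeomorphism \<Lambda> dendrite_X0 \<phi> \<psi>" "\<forall>x\<in>\<Lambda>. \<phi> ((f ^^ k) x) = F (\<phi> x)"
    using assms(2) unfolding admits_special_dendrite_def by blast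
  moreover from this have "compact \<Lambda>"
    using compact_Int_closed[OF \<open>compact X\<close> \<open>closed \<Lambda>\<close>] by (simp add: Int_absorb1)
  ultimately show thesis
    by (intro that[of F \<Lambda> k \<phi> \<psi>]) (simp add: special_dendrite_embedding_def)
qed

context special_dendrite_embedding
begin

lemma funpow_induced_map_word_continuum:
  assumes "set w \<subseteq> {..K}"
  shows "(induced_map f ^^ (i * k)) (\<psi> ` word_dendrite K w 0) = \<psi> ` word_dendrite K w i"
proof -
  have "(induced_map f ^^ (i * k)) (\<psi> ` word_dendrite K w 0) = ((f ^^ k) ^^ i) ` \<psi> ` word_dendrite K w 0"
    by (simp add: funpow_induced_map funpow_mult mult.commute)
  also have "\<dots> = \<psi> ` (F ^^ i) ` word_dendrite K w 0"
    using conj word_dendrite_subset[OF assms]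
    by (intro homeomorphism_conjugacy_image_funpow[OF hom invariant]) auto
  also have "\<dots> = \<psi> ` word_dendrite K w i"
    unfolding image_funpow_word_dendrite[OF special assms] ..
  finally show ?thesis .
qed

lemma word_continuum_in_continua_hyperspace:
  assumes "set w \<subseteq> {..K}"
  shows "\<psi> ` word_dendrite K w i \<in> continua_hyperspace X"
proof -
  have cont: "continuous_on (word_dendrite K w i) \<psi>"
    using homeomorphism_cont2[OF hom] word_dendrite_subset[OF assms] by (rule continuous_on_subset)
  have "\<psi> ` word_dendrite K w i \<subseteq> X"
    using word_dendrite_subset[OF assms] homeomorphism_image2[OF hom] subset by blast
  moreover have "compact (\<psi> ` word_dendrite K w i)"
    using cont compact_word_dendrite by (rule compact_continuous_image)
  moreover have "connected (\<psi> ` word_dendrite K w i)"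
    using cont connected_word_dendrite by (rule connected_continuous_image)
  ultimately show ?thesis
    using word_dendrite_nonempty by (auto simp: continua_hyperspace_def)
qed

lemma word_continua_far_apart:
  assumes "K \<ge> 2"
  obtains \<delta> where "\<delta> > 0"
    and "\<And>w w'. set w \<subseteq> {..K} \<Longrightarrow> set w' \<subseteq> {..K} \<Longrightarrow> length w = length w' \<Longrightarrow> w \<noteq> w' \<Longrightarrow>
      \<exists>i<length w. \<delta> \<le> hausdorff_dist (\<psi> ` word_dendrite K w i) (\<psi> ` word_dendrite K w' i)"
proof -
  have "uniformly_continuous_on \<Lambda> \<phi>"
    using compact_uniformly_continuous[OF homeomorphism_cont1[OF hom] compact] .
  moreover have "0 < 1 / real K"
    using \<open>K \<ge> 2\<close> by simp
  ultimately obtain \<delta> where "\<delta> > 0" and pull_back: "\<And>p Q. p \<in> \<Lambda> \<Longrightarrow> Q \<subseteq> \<Lambda> \<Longrightarrow> Q \<noteq> {} \<Longrightarrow>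
      1 / real K \<le> infdist (\<phi> p) (\<phi> ` Q) \<Longrightarrow> \<delta> \<le> infdist p Q"
    by (rule infdist_ge_of_uniformly_continuous_image) blast
  have \<psi>_into: "\<psi> ` dendrite_X0 \<subseteq> \<Lambda>"
    using homeomorphism_image2[OF hom] by simp
  have far: "\<delta> \<le> hausdorff_dist (\<psi> ` word_dendrite K u i) (\<psi> ` word_dendrite K v i)
      \<and> \<delta> \<le> hausdorff_dist (\<psi> ` word_dendrite K v i) (\<psi> ` word_dendrite K u i)"
    if uv: "set u \<subseteq> {..K}" "set v \<subseteq> {..K}" "i < length u" "v ! i < u ! i" for u v i
  proof -
    obtain p where p: "p \<in> word_dendrite K u i" "1 / real K \<le> infdist p (word_dendrite K v i)"
      using word_dendrite_far_point[OF \<open>K \<ge> 2\<close> uv(3,4)] by blast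
    have sub: "word_dendrite K u i \<subseteq> dendrite_X0" "word_dendrite K v i \<subseteq> dendrite_X0"
      using word_dendrite_subset[OF uv(1)] word_dendrite_subset[OF uv(2)] .
    have "\<psi> p \<in> \<Lambda>" "\<psi> ` word_dendrite K v i \<subseteq> \<Lambda>"
      using p(1) sub \<psi>_into by auto
    moreover have "\<phi> (\<psi> p) = p"
      using p(1) sub(1) by (intro homeomorphism_apply2[OF hom]) auto
    moreover have "\<phi> ` \<psi> ` word_dendrite K v i = (\<lambda>y. y) ` word_dendrite K v i"
      unfolding image_image using sub(2) homeomorphism_apply2[OF hom] by (intro image_cong) auto
    ultimately have "\<delta> \<le> infdist (\<psi> p) (\<psi> ` word_dendrite K v i)"
      using p(2) word_dendrite_nonempty by (intro pull_back) auto
    moreover have "bounded (\<psi> ` word_dendrite K u i)"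
      using compact_imp_bounded[OF compact] sub(1) \<psi>_into by (meson bounded_subset image_mono order_trans)
    ultimately show ?thesis
      using infdist_le_hausdorff_dist[of "\<psi> p" "\<psi> ` word_dendrite K u i" "\<psi> ` word_dendrite K v i"] p(1)
      by auto
  qed
  have "\<exists>i<length w. \<delta> \<le> hausdorff_dist (\<psi> ` word_dendrite K w i) (\<psi> ` word_dendrite K w' i)"
    if w: "set w \<subseteq> {..K}" "set w' \<subseteq> {..K}" "length w = length w'" "w \<noteq> w'" for w w'
  proof -
    obtain i where "i < length w" "w ! i \<noteq> w' ! i"
      using w(3,4) nth_equalityI by metis
    then show ?thesis
      using far[OF w(1,2)] far[OF w(2,1)] w(3) by (cases "w' ! i < w ! i") auto
  qed
  with \<open>\<delta> > 0\<close> show thesis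
    by (rule that)
qed

lemma separated_word_continua:
  assumes "K \<ge> 2"
  obtains \<epsilon> where "\<epsilon> > 0" and "\<And>n. \<exists>E.
    separated_set hausdorff_dist (induced_map f) (continua_hyperspace X) (n * k) \<epsilon> E \<and> card E = K ^ n"
proof -
  obtain \<delta> where "\<delta> > 0" and far: "\<And>w w'. set w \<subseteq> {..K} \<Longrightarrow> set w' \<subseteq> {..K} \<Longrightarrow>
      length w = length w' \<Longrightarrow> w \<noteq> w' \<Longrightarrow>
      \<exists>i<length w. \<delta> \<le> hausdorff_dist (\<psi> ` word_dendrite K w i) (\<psi> ` word_dendrite K w' i)"
    using word_continua_far_apart[OF \<open>K \<ge> 2\<close>] by blast
  have "\<exists>E. separated_set hausdorff_dist (induced_map f) (continua_hyperspace X) (n * k) (\<delta> / 2) E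
      \<and> card E = K ^ n" for n
  proof -
    define W where "W = {w. set w \<subseteq> {..<K} \<and> length w = n}"
    define A where "A w = \<psi> ` word_dendrite K w 0" for w
    have W: "set w \<subseteq> {..K}" "length w = n" if "w \<in> W" for w
      using that by (auto simp: W_def)
    have orbit: "\<exists>i<n. \<delta> \<le> hausdorff_dist ((induced_map f ^^ (i * k)) (A w)) ((induced_map f ^^ (i * k)) (A w'))"
      if ww: "w \<in> W" "w' \<in> W" "w \<noteq> w'" for w w'
      using far[OF W(1)[OF ww(1)] W(1)[OF ww(2)] _ ww(3)] W[OF ww(1)] W[OF ww(2)]
      by (simp add: A_def funpow_induced_map_word_continuum)
    have "inj_on A W"
    proof (rule inj_onI, rule ccontr)
      fix w w' assume ww: "w \<in> W" "w' \<in> W" "A w = A w'" "w \<noteq> w'"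
      then obtain i where "\<delta> \<le> hausdorff_dist ((induced_map f ^^ (i * k)) (A w)) ((induced_map f ^^ (i * k)) (A w))"
        using orbit by metis
      then have "\<delta> \<le> hausdorff_dist (\<psi> ` word_dendrite K w i) (\<psi> ` word_dendrite K w i)"
        using W(1)[OF ww(1)] by (simp add: A_def funpow_induced_map_word_continuum)
      then show False
        using \<open>\<delta> > 0\<close> hausdorff_dist_self word_dendrite_nonempty by (metis image_is_empty not_le)
    qed
    have "\<exists>j<n * k. \<delta> / 2 < hausdorff_dist ((induced_map f ^^ j) (A w)) ((induced_map f ^^ j) (A w'))"
      if ww: "w \<in> W" "w' \<in> W" "A w \<noteq> A w'" for w w'
    proof -
      obtain i where "i < n" "\<delta> \<le> hausdorff_dist ((induced_map f ^^ (i * k)) (A w)) ((induced_map f ^^ (i * k)) (A w'))"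
        using orbit[OF ww(1,2)] ww(3) by blast
      moreover have "i * k < n * k"
        using \<open>i < n\<close> period by simp
      ultimately show ?thesis
        using \<open>\<delta> > 0\<close> by (intro exI[of _ "i * k"]) auto
    qed
    moreover have "A ` W \<subseteq> continua_hyperspace X"
      using W word_continuum_in_continua_hyperspace by (auto simp: A_def)
    moreover have "finite W" "card W = K ^ n"
      using finite_lists_length_eq[of "{..<K}" n] card_lists_length_eq[of "{..<K}" n]
      by (simp_all add: W_def)
    ultimately have "separated_set hausdorff_dist (induced_map f) (continua_hyperspace X) (n * k) (\<delta> / 2) (A ` W)"
      "card (A ` W) = K ^ n"
      using card_image[OF \<open>inj_on A W\<close>] by (auto simp: separated_set_def)
    then show ?thesis
      by blast
  qed
  with \<open>\<delta> > 0\<close> show thesis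
    by (intro that[of "\<delta> / 2"]) auto
qed

end

theorem theorem5p19:
  fixes X :: "'a::metric_space set" and f :: "'a \<Rightarrow> 'a"
  assumes "compact X" and "connected X" and "X \<noteq> {}"
    and "\<exists>g. homeomorphism X X f g"
    and "admits_special_dendrite X f"
  shows "top_entropy hausdorff_dist (induced_map f) (continua_hyperspace X) = \<infinity>
       \<and> top_entropy hausdorff_dist (induced_map f) (hyperspace X) = \<infinity>"
proof -
  \<comment> \<open>only compactness of \<open>X\<close> is needed\<close>
  obtain F \<Lambda> k \<phi> \<psi> where "special_dendrite_embedding X f F \<Lambda> k \<phi> \<psi>"
    using admits_special_dendrite_embedding[OF \<open>compact X\<close> \<open>admits_special_dendrite X f\<close>] .
  then interpret special_dendrite_embedding X f F \<Lambda> k \<phi> \<psi> .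
  have continua: "top_entropy hausdorff_dist (induced_map f) (continua_hyperspace X) = \<infinity>"
    using period
  proof (rule top_entropy_eq_infinity_of_separated_sets)
    fix K :: nat
    assume "K \<ge> 2"
    then show "\<exists>\<epsilon>>0. \<forall>n\<ge>1. \<exists>E. separated_set hausdorff_dist (induced_map f)
        (continua_hyperspace X) (n * k) \<epsilon> E \<and> card E = K ^ n"
      using separated_word_continua by metis
  qed
  have "continua_hyperspace X \<subseteq> hyperspace X"
    by (auto simp: continua_hyperspace_def hyperspace_def compact_imp_closed)
  then have "top_entropy hausdorff_dist (induced_map f) (hyperspace X) = \<infinity>"
    using top_entropy_mono continua by (metis ereal_infty_less_eq(1))
  with continua show ?thesis ..
qed

end
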